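(* For $n\ge1$, $$\sum_{\sigma\in\mathcal D^S_n}(-1)^{\mathrm{inv}(\sigma)}q^{\mathrm{maj}(\sigma)}=[n]_q!\sum_{k=0}^n\frac{(-1)^k q^{\binom k2}}{[k]_q!}\left(\frac{1-q}{1+q}\right)^{\lfloor (n-k)/2\rfloor}.$$
   Context: $\mathcal D^S_n$ is the set of derangements in the symmetric group $S_n$ (permutations $\sigma=\sigma_1\cdots\sigma_n$ of $[n]$ with $\sigma_i\ne i$ for all $i$). $\mathrm{inv}(\sigma)=\#\{(i,j):i<j,\sigma_i>\sigma_j\}$ (the Coxeter length), $\mathrm{maj}(\sigma)=\sum_{i:\sigma_i>\sigma_{i+1}} i$. For an indeterminate $x$ and $m\ge1$, $[m]_x=1+x+\dots+x^{m-1}$, $[0]_x=1$, $[m]_q!=[1]_q\cdots[m]_q$, $[0]_q!=1$. *)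

theory Defs
  imports Complex_Main "HOL-Combinatorics.Permutations"
begin

text \<open>q-integer [m]_x = 1 + x + ... + x^(m-1) for m >= 1, and [0]_x = 1 (paper's convention).\<close>
definition qint :: "'a::comm_ring_1 \<Rightarrow> nat \<Rightarrow> 'a" where
  "qint x m = (if m = 0 then 1 else (\<Sum>i<m. x ^ i))"

definition qfact :: "'a::comm_ring_1 \<Rightarrow> nat \<Rightarrow> 'a" where
  "qfact x m = (\<Prod>i=1..m. qint x i)"

definition derangements :: "nat \<Rightarrow> (nat \<Rightarrow> nat) set" where
  "derangements n = {\<sigma>. \<sigma> permutes {1..n} \<and> (\<forall>i\<in>{1..n}. \<sigma> i \<noteq> i)}"

definition inv_num :: "nat \<Rightarrow> (nat \<Rightarrow> nat) \<Rightarrow> nat" where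
  "inv_num n \<sigma> = card {(i, j). i \<in> {1..n} \<and> j \<in> {1..n} \<and> i < j \<and> \<sigma> i > \<sigma> j}"

definition maj :: "nat \<Rightarrow> (nat \<Rightarrow> nat) \<Rightarrow> nat" where
  "maj n \<sigma> = (\<Sum>i \<in> {i. 1 \<le> i \<and> i < n \<and> \<sigma> i > \<sigma> (Suc i)}. i)"

end

theory Submission
  imports Defs "HOL-Combinatorics.Multiset_Permutations" "HOL-Library.Disjoint_Sets"
    "HOL-Computational_Algebra.Formal_Power_Series"
begin

text \<open>
Write \<open>w(\<sigma>) = (-1)^inv \<sigma> q^maj \<sigma>\<close> and let \<open>h(n,k)\<close> be the sum of \<open>w\<close> over the permutations
of \<open>[n]\<close> with exactly \<open>k\<close> fixed points; the left-hand side is \<open>h(n,0)\<close>.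

Inserting a new fixed point into a permutation of \<open>[n]\<close> at each of its \<open>n + 1\<close> possible places
preserves the sign, and raises \<open>maj\<close> plus the number of fixed points to the right of the new one
by each of \<open>0, \<dots>, n\<close> exactly once. Hence \<open>[k+1]\<^sub>q h(n+1,k+1) = [n+1]\<^sub>q h(n,k)\<close>, i.e.
\<open>h(n,k) = [n]\<^sub>q! / ([k]\<^sub>q! [n-k]\<^sub>q!) \<cdot> h(n-k,0)\<close>.

For the total \<open>S(n) = \<Sum>\<^sub>k h(n,k)\<close>, exchanging the values \<open>n+1\<close> and \<open>n+2\<close> is a sign-reversing,
\<open>maj\<close>-preserving involution on the permutations of \<open>[n+2]\<close> in which these values are not
adjacent. The others arise from permutations of \<open>[n]\<close> by inserting the block \<open>(n+1,n+2)\<close> or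
\<open>(n+2,n+1)\<close>, which gives \<open>S(n+2) = (1-q)/(1+q) \<cdot> [n+1]\<^sub>q [n+2]\<^sub>q S(n)\<close> and so
\<open>S(n) = [n]\<^sub>q! ((1-q)/(1+q))^\<lfloor>n/2\<rfloor>\<close>.

Thus \<open>S(n)/[n]\<^sub>q!\<close> is the q-exponential convolution of \<open>h(n,0)/[n]\<^sub>q!\<close> with \<open>1/[n]\<^sub>q!\<close>, which is
inverted by the q-binomial identity \<open>\<Sum>\<^sub>k (-1)^k q^(k choose 2) / ([k]\<^sub>q! [n-k]\<^sub>q!) = 0\<close> for \<open>n > 0\<close>.
\<close>

section \<open>q-numbers\<close>

text \<open>Unlike \<open>qint\<close>, \<open>qnum q 0 = 0\<close>, so that \<open>qnum_add\<close> holds without side conditions.\<close>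
definition qnum :: "'a::comm_ring_1 \<Rightarrow> nat \<Rightarrow> 'a" where
  "qnum q m = (\<Sum>i<m. q ^ i)"

lemma qnum_0 [simp]: "qnum q 0 = 0"
  by (simp add: qnum_def)

lemma qnum_Suc: "qnum q (Suc a) = qnum q a + q ^ a"
  by (simp add: qnum_def)

lemma qnum_Suc_shift: "qnum q (Suc a) = 1 + q * qnum q a"
  unfolding qnum_def by (simp add: sum.lessThan_Suc_shift sum_distrib_left del: sum.lessThan_Suc)

lemma qnum_add: "qnum q (a + b) = qnum q a + q ^ a * qnum q b"
  unfolding qnum_def by (induction b) (auto simp: algebra_simps power_add)

lemma one_minus_q_mult_qnum: "(1 - q) * qnum q n = 1 - q ^ n"
proof (induction n)
  case (Suc n)
  show ?case unfolding qnum_Suc distrib_left Suc.IH by (simp add: algebra_simps)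
qed simp

lemma qnum_nonzero:
  fixes q :: real
  assumes "q \<noteq> -1" "0 < i"
  shows "qnum q i \<noteq> 0"
proof
  assume z: "qnum q i = 0"
  show False
  proof (cases "q = 1")
    case True
    then show False using z assms by (simp add: qnum_def)
  next
    case False
    then have "q ^ i = 1" using one_minus_q_mult_qnum[of q i] z by simp
    then have "\<bar>q\<bar> = 1" using power_eq_1_iff[of q i] assms by auto
    then show False using False assms by auto
  qed
qed

lemma qfact_0 [simp]: "qfact q 0 = 1"
  by (simp add: qfact_def)

lemma qfact_Suc: "qfact q (Suc n) = qfact q n * qnum q (Suc n)"
  by (simp add: qfact_def qint_def qnum_def prod.atLeast1_atMost_eq)

lemma qfact_nonzero: "(q::real) \<noteq> -1 \<Longrightarrow> qfact q n \<noteq> 0"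
  by (induction n) (auto simp: qfact_Suc qnum_nonzero)

section \<open>Descents, major index and inversions of lists\<close>

fun des_list :: "nat list \<Rightarrow> nat" where
  "des_list (x # y # zs) = (if y < x then 1 else 0) + des_list (y # zs)"
| "des_list _ = 0"

fun maj_list :: "nat list \<Rightarrow> nat" where
  "maj_list (x # y # zs) = (if y < x then 1 else 0) + des_list (y # zs) + maj_list (y # zs)"
| "maj_list _ = 0"

fun inv_list :: "nat list \<Rightarrow> nat" where
  "inv_list [] = 0"
| "inv_list (x # xs) = length (filter (\<lambda>y. y < x) xs) + inv_list xs"

fun cross_inv :: "nat list \<Rightarrow> nat list \<Rightarrow> nat" where
  "cross_inv [] Y = 0"
| "cross_inv (x # X) Y = length (filter (\<lambda>y. y < x) Y) + cross_inv X Y"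

lemma des_list_Cons: "des_list (x # ys) = (if ys \<noteq> [] \<and> hd ys < x then 1 else 0) + des_list ys"
  by (cases ys) auto

lemma maj_list_Cons:
  "maj_list (x # ys) = (if ys \<noteq> [] \<and> hd ys < x then 1 else 0) + des_list ys + maj_list ys"
  by (cases ys) auto

declare des_list.simps(1) [simp del] maj_list.simps(1) [simp del]

lemma des_list_append:
  "des_list (X @ Y) = des_list X + des_list Y + (if X \<noteq> [] \<and> Y \<noteq> [] \<and> hd Y < last X then 1 else 0)"
  by (induction X) (auto simp: des_list_Cons)

lemma maj_list_append: "maj_list (X @ Y) = maj_list X + maj_list Y + length X * des_list Y
   + (if X \<noteq> [] \<and> Y \<noteq> [] \<and> hd Y < last X then length X else 0)"
  by (induction X) (auto simp: maj_list_Cons des_list_append des_list_Cons)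

lemma inv_list_append: "inv_list (X @ Y) = inv_list X + inv_list Y + cross_inv X Y"
  by (induction X) auto

lemma cross_inv_Cons_right: "cross_inv X (y # Y) = length (filter (\<lambda>x. y < x) X) + cross_inv X Y"
  by (induction X) auto

lemma drop_pred_eq_Cons: "0 < p \<Longrightarrow> p \<le> length xs \<Longrightarrow> drop (p - 1) xs = xs!(p-1) # drop p xs"
  by (metis Cons_nth_drop_Suc Suc_pred' diff_less less_le_trans zero_less_one)

lemma des_list_drop_pred:
  assumes "0 < p" "p < length xs"
  shows "des_list (drop (p - 1) xs) = des_list (drop p xs) + (if xs!p < xs!(p-1) then 1 else 0)"
  using assms drop_pred_eq_Cons[of p xs] by (simp add: des_list_Cons hd_drop_conv_nth)

lemma des_list_map: "strict_mono f \<Longrightarrow> des_list (map f xs) = des_list xs"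
  by (induction xs) (auto simp: des_list_Cons hd_map strict_mono_less)

lemma maj_list_map: "strict_mono f \<Longrightarrow> maj_list (map f xs) = maj_list xs"
  by (induction xs) (auto simp: maj_list_Cons hd_map des_list_map strict_mono_less)

lemma inv_list_map: "strict_mono f \<Longrightarrow> inv_list (map f xs) = inv_list xs"
  by (induction xs) (auto simp: filter_map o_def strict_mono_less)

lemma cross_inv_map: "strict_mono f \<Longrightarrow> cross_inv (map f X) (map f Y) = cross_inv X Y"
  by (induction X) (auto simp: filter_map o_def strict_mono_less)

section \<open>Inserting a fixed point\<close>

definition shift_up :: "nat \<Rightarrow> nat \<Rightarrow> nat" where
  "shift_up j x = (if j \<le> x then Suc x else x)"

definition shift_down :: "nat \<Rightarrow> nat \<Rightarrow> nat" where
  "shift_down j x = (if j < x then x - 1 else x)"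

lemma strict_mono_shift_up: "strict_mono (shift_up j)"
  by (auto simp: strict_mono_def shift_up_def)

lemma shift_down_shift_up [simp]: "shift_down j (shift_up j x) = x"
  by (auto simp: shift_up_def shift_down_def)

lemma shift_up_shift_down: "x \<noteq> j \<Longrightarrow> shift_up j (shift_down j x) = x"
  by (auto simp: shift_up_def shift_down_def)

text \<open>Positions are 0-based: \<open>insert_fixed p xs\<close> puts the value \<open>p + 1\<close> at position \<open>p\<close>, i.e. it
  inserts the fixed point \<open>p + 1\<close> into the permutation whose one-line notation is \<open>xs\<close>.\<close>
definition insert_fixed :: "nat \<Rightarrow> nat list \<Rightarrow> nat list" where
  "insert_fixed p xs =
     map (shift_up (Suc p)) (take p xs) @ Suc p # map (shift_up (Suc p)) (drop p xs)"

definition remove_fixed :: "nat \<Rightarrow> nat list \<Rightarrow> nat list" where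
  "remove_fixed p ys = map (shift_down (Suc p)) (take p ys @ drop (Suc p) ys)"

fun fix_count_from :: "nat \<Rightarrow> nat list \<Rightarrow> nat" where
  "fix_count_from k [] = 0"
| "fix_count_from k (x # xs) = (if x = Suc k then 1 else 0) + fix_count_from (Suc k) xs"

lemma maj_list_insert_fixed:
  assumes "0 < p" "p < length xs"
  shows "maj_list (insert_fixed p xs) + (if xs!p < xs!(p-1) then p else 0)
       = maj_list xs + des_list (drop p xs) + (if xs!p \<le> p then Suc p else 0)
         + (if Suc p \<le> xs!(p-1) then p else 0)"
proof -
  define A where "A = take p xs"
  define B where "B = drop p xs"
  have xs: "xs = A @ B" by (simp add: A_def B_def)
  have lA: "length A = p" using assms by (simp add: A_def)
  have An: "A \<noteq> []" "B \<noteq> []" using assms by (auto simp: A_def B_def)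
  have lastA: "last A = xs!(p-1)"
  proof -
    obtain i where i: "p = Suc i" using assms by (cases p) auto
    show ?thesis using assms unfolding A_def i by (simp add: take_Suc_conv_app_nth)
  qed
  have hdB: "hd B = xs!p" using assms by (simp add: B_def hd_drop_conv_nth)
  have maj_xs: "maj_list xs = maj_list A + maj_list B + p * des_list B + (if hd B < last A then p else 0)"
    using An lA by (simp add: xs maj_list_append)
  have maj_ins: "maj_list (insert_fixed p xs) = maj_list (map (shift_up (Suc p)) A)
     + maj_list (Suc p # map (shift_up (Suc p)) B) + p * des_list (Suc p # map (shift_up (Suc p)) B)
     + (if Suc p < last (map (shift_up (Suc p)) A) then p else 0)"
    using An lA by (simp add: insert_fixed_def A_def[symmetric] B_def[symmetric] maj_list_append)
  have "hd (map (shift_up (Suc p)) B) = shift_up (Suc p) (hd B)"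
    "last (map (shift_up (Suc p)) A) = shift_up (Suc p) (last A)"
    using An by (simp_all add: hd_map last_map)
  then have "maj_list (insert_fixed p xs) + (if xs!p < xs!(p-1) then p else 0)
       = maj_list xs + des_list B + (if xs!p \<le> p then Suc p else 0)
         + (if Suc p \<le> xs!(p-1) then p else 0)"
    using maj_ins maj_xs An
    by (auto simp: maj_list_Cons des_list_Cons maj_list_map des_list_map strict_mono_shift_up
        lastA hdB shift_up_def)
  then show ?thesis by (simp add: B_def)
qed

definition tail_stat :: "nat list \<Rightarrow> nat \<Rightarrow> nat" where
  "tail_stat xs p = des_list (drop p xs) + fix_count_from p (drop p xs)"

definition insertion_gap :: "nat list \<Rightarrow> nat \<Rightarrow> nat" where
  "insertion_gap xs p = tail_stat xs p + (if xs!p \<le> p then 1 else 0)"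

definition insertion_exp :: "nat list \<Rightarrow> nat \<Rightarrow> nat" where
  "insertion_exp xs p = maj_list (insert_fixed p xs) + fix_count_from p (drop p xs)"

lemma tail_stat_pred:
  assumes "0 < p" "p < length xs"
  shows "tail_stat xs (p-1)
    = tail_stat xs p + (if xs!p < xs!(p-1) then 1 else 0) + (if xs!(p-1) = p then 1 else 0)"
  using assms des_list_drop_pred[OF assms] drop_pred_eq_Cons[of p xs]
  by (simp add: tail_stat_def)

lemma insertion_exp_step:
  assumes "0 < p" "p < length xs"
  shows "insertion_exp xs p = maj_list xs + insertion_gap xs p
           \<and> insertion_gap xs (p-1) = Suc (insertion_gap xs p)
       \<or> insertion_exp xs p = maj_list xs + insertion_gap xs p + p
           \<and> insertion_gap xs (p-1) = insertion_gap xs p"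
  using maj_list_insert_fixed[OF assms] tail_stat_pred[OF assms] assms
  unfolding insertion_exp_def insertion_gap_def tail_stat_def
  by (cases "xs!p < xs!(p-1)"; cases "xs!p \<le> p"; cases "Suc p \<le> xs!(p-1)"; cases "xs!(p-1) = p")
    auto

lemma insertion_exp_last:
  assumes "\<forall>x\<in>set xs. x \<le> length xs"
  shows "insertion_exp xs (length xs) = maj_list xs"
proof -
  have "map (shift_up (Suc (length xs))) xs = xs"
    using assms by (auto simp: shift_up_def intro!: map_idI)
  moreover have "xs \<noteq> [] \<Longrightarrow> \<not> Suc (length xs) < last xs"
    using assms last_in_set[of xs] by fastforce
  ultimately show ?thesis by (auto simp: insertion_exp_def insert_fixed_def maj_list_append)
qed

lemma insertion_gap_last:
  assumes "\<forall>x\<in>set xs. x \<le> length xs" "xs \<noteq> []"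
  shows "insertion_gap xs (length xs - 1) = 1"
proof -
  obtain m where m: "length xs = Suc m" using assms by (cases xs) auto
  have "drop m xs = [xs!m]"
    using m by (metis Cons_nth_drop_Suc drop_all le_refl lessI)
  moreover have "xs!m \<le> Suc m" using assms m by (metis lessI nth_mem)
  ultimately show ?thesis using m by (simp add: insertion_gap_def tail_stat_def)
qed

lemma insertion_exp_first:
  assumes "0 \<notin> set xs"
  shows "insertion_exp xs 0 = maj_list xs + tail_stat xs 0"
proof -
  have "\<forall>x\<in>set xs. 1 \<le> x" using assms by (metis less_one not_le)
  then have sh: "map (shift_up (Suc 0)) xs = map Suc xs" by (auto simp: shift_up_def)
  have mono: "strict_mono Suc" by (simp add: strict_mono_def)
  have "xs \<noteq> [] \<Longrightarrow> hd xs \<noteq> 0" using assms by (cases xs) auto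
  moreover have "xs \<noteq> [] \<Longrightarrow> hd (map Suc xs) \<noteq> 0" by (cases xs) auto
  ultimately show ?thesis unfolding insertion_exp_def insert_fixed_def tail_stat_def
    by (auto simp: maj_list_Cons hd_map maj_list_map des_list_map sh mono) (cases xs; simp)
qed

lemma insertion_gap_first: "0 \<notin> set xs \<Longrightarrow> xs \<noteq> [] \<Longrightarrow> insertion_gap xs 0 = tail_stat xs 0"
  unfolding insertion_gap_def by (cases xs) auto

text \<open>With \<open>G = insertion_gap xs (p - 1)\<close>, the exponents \<open>insertion_exp xs i - maj_list xs\<close> for
  \<open>p \<le> i \<le> n\<close> are exactly \<open>{0..<G} \<union> {p + G..n}\<close>: by \<open>insertion_exp_step\<close>, each step to the left
  takes the lowest or the highest of the missing values.\<close>
lemma sum_insertion_exp_from: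
  fixes q :: "'a::comm_ring_1"
  assumes xs: "\<forall>x\<in>set xs. 1 \<le> x \<and> x \<le> length xs" and n: "n = length xs"
    and p: "1 \<le> p" "p \<le> n"
  shows "insertion_gap xs (p-1) \<le> n + 1 - p \<and>
    (\<Sum>i=p..n. q ^ insertion_exp xs i) = q ^ maj_list xs *
      (qnum q (insertion_gap xs (p-1))
       + q ^ (p + insertion_gap xs (p-1)) * qnum q (n + 1 - p - insertion_gap xs (p-1)))"
  using p(2)
proof (induction p rule: inc_induct)
  case base
  have "xs \<noteq> []" using n p by auto
  then have "insertion_gap xs (n-1) = 1" using insertion_gap_last[of xs] xs n by auto
  moreover have "insertion_exp xs n = maj_list xs" using insertion_exp_last[of xs] xs n by auto
  ultimately show ?case by (simp add: qnum_def)
next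
  case (step p)
  define g where "g = insertion_gap xs p"
  have pn: "0 < p" "p < length xs" using step p n by auto
  have IH: "g \<le> n - p" "(\<Sum>i=Suc p..n. q ^ insertion_exp xs i)
      = q ^ maj_list xs * (qnum q g + q ^ (Suc p + g) * qnum q (n - p - g))"
    using step.IH by (simp_all add: g_def)
  have split: "(\<Sum>i=p..n. q ^ insertion_exp xs i)
      = q ^ insertion_exp xs p + (\<Sum>i=Suc p..n. q ^ insertion_exp xs i)"
    using pn n by (simp add: sum.atLeast_Suc_atMost)
  from insertion_exp_step[OF pn] show ?case
  proof
    assume a: "insertion_exp xs p = maj_list xs + insertion_gap xs p
      \<and> insertion_gap xs (p-1) = Suc (insertion_gap xs p)"
    have "(\<Sum>i=p..n. q ^ insertion_exp xs i)
        = q ^ maj_list xs * (q ^ g + qnum q g + q ^ (Suc p + g) * qnum q (n - p - g))"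
      using split IH a by (simp add: g_def power_add algebra_simps)
    also have "\<dots> = q ^ maj_list xs * (qnum q (Suc g) + q ^ (p + Suc g) * qnum q (n + 1 - p - Suc g))"
      by (simp add: qnum_Suc algebra_simps)
    finally show ?thesis using a IH pn n by (simp add: g_def)
  next
    assume a: "insertion_exp xs p = maj_list xs + insertion_gap xs p + p
      \<and> insertion_gap xs (p-1) = insertion_gap xs p"
    have e: "n + 1 - p - g = Suc (n - p - g)" using IH pn n by simp
    have "(\<Sum>i=p..n. q ^ insertion_exp xs i)
        = q ^ maj_list xs * (q ^ (p + g) + qnum q g + q ^ (Suc p + g) * qnum q (n - p - g))"
      using split IH a by (simp add: g_def power_add algebra_simps)
    also have "\<dots> = q ^ maj_list xs * (qnum q g + q ^ (p + g) * qnum q (n + 1 - p - g))"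
      unfolding e qnum_Suc_shift by (simp add: algebra_simps power_add)
    finally show ?thesis using a IH pn n by (simp add: g_def)
  qed
qed

lemma sum_insertion_exp:
  fixes q :: "'a::comm_ring_1"
  assumes xs: "\<forall>x\<in>set xs. 1 \<le> x \<and> x \<le> length xs" and n: "n = length xs"
  shows "(\<Sum>i=0..n. q ^ insertion_exp xs i) = qnum q (Suc n) * q ^ maj_list xs"
proof (cases "n = 0")
  case True
  then show ?thesis using n by (simp add: insertion_exp_def insert_fixed_def qnum_def)
next
  case False
  define G where "G = insertion_gap xs 0"
  have z: "0 \<notin> set xs" using xs by auto
  have P: "G \<le> n" "(\<Sum>i=1..n. q ^ insertion_exp xs i)
      = q ^ maj_list xs * (qnum q G + q ^ (1 + G) * qnum q (n - G))"
    using sum_insertion_exp_from[OF xs n, of 1 q] False by (simp_all add: G_def)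
  have "(\<Sum>i=0..n. q ^ insertion_exp xs i) = q ^ insertion_exp xs 0 + (\<Sum>i=1..n. q ^ insertion_exp xs i)"
    by (simp add: sum.atLeast_Suc_atMost)
  also have "\<dots> = q ^ maj_list xs * (q ^ G + qnum q G + q ^ (1 + G) * qnum q (n - G))"
    using P insertion_exp_first[OF z] insertion_gap_first[OF z] False n
    by (simp add: G_def power_add algebra_simps)
  also have "\<dots> = q ^ maj_list xs * qnum q (Suc G + (n - G))"
    using qnum_add[of q "Suc G" "n - G"] qnum_Suc[of q G] by (simp add: algebra_simps)
  also have "Suc G + (n - G) = Suc n" using P by simp
  finally show ?thesis by simp
qed

section \<open>Fixed points of permutations of \<open>[n]\<close>\<close>

abbreviation perms :: "nat \<Rightarrow> nat list set" where
  "perms n \<equiv> permutations_of_set {1..n}"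

lemma length_perms: "xs \<in> perms n \<Longrightarrow> length xs = n"
  using length_finite_permutations_of_set by fastforce

lemma perms_bounds: "xs \<in> perms n \<Longrightarrow> \<forall>x\<in>set xs. 1 \<le> x \<and> x \<le> length xs"
  using length_perms[of xs n] by (auto simp: permutations_of_set_def)

definition fixed_positions :: "nat list \<Rightarrow> nat set" where
  "fixed_positions ys = {i. i < length ys \<and> ys!i = Suc i}"

definition fix_count :: "nat list \<Rightarrow> nat" where
  "fix_count ys = card (fixed_positions ys)"

lemma finite_fixed_positions [simp]: "finite (fixed_positions ys)"
  by (simp add: fixed_positions_def)

lemma fix_count_le_length: "fix_count ys \<le> length ys"
proof -
  have "fixed_positions ys \<subseteq> {..<length ys}" by (auto simp: fixed_positions_def)
  then show ?thesis unfolding fix_count_def by (metis card_lessThan card_mono finite_lessThan)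
qed

lemma fix_count_from_drop: "fix_count_from k (drop k ys) = card {i \<in> fixed_positions ys. k \<le> i}"
proof (induction "length ys - k" arbitrary: k)
  case 0
  then have "{i \<in> fixed_positions ys. k \<le> i} = {}" by (auto simp: fixed_positions_def)
  then show ?case using 0 by simp
next
  case (Suc d)
  then have k: "k < length ys" by simp
  have "{i \<in> fixed_positions ys. k \<le> i}
      = (if ys!k = Suc k then {k} else {}) \<union> {i \<in> fixed_positions ys. Suc k \<le> i}"
    using k by (auto simp: fixed_positions_def) (metis Suc_leI le_neq_implies_less)
  moreover have "drop k ys = ys!k # drop (Suc k) ys" using k by (simp add: Cons_nth_drop_Suc)
  ultimately show ?case using Suc by (auto simp: card_insert_if)
qed

lemma sum_power_card_greater:
  fixes F :: "'b::linorder set" and q :: "'a::comm_ring_1"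
  assumes "finite F"
  shows "(\<Sum>j\<in>F. q ^ card {i \<in> F. j < i}) = qnum q (card F)"
  using assms
proof (induction F rule: finite_linorder_max_induct)
  case (insert b A)
  have bA: "b \<notin> A" using insert by auto
  have "{i \<in> insert b A. b < i} = {}" using insert by auto
  then have "(\<Sum>j\<in>insert b A. q ^ card {i \<in> insert b A. j < i})
      = 1 + (\<Sum>j\<in>A. q ^ card {i \<in> insert b A. j < i})"
    unfolding sum.insert[OF \<open>finite A\<close> bA] by (simp only: card.empty power_0)
  also have "\<dots> = 1 + q * (\<Sum>j\<in>A. q ^ card {i \<in> A. j < i})"
  proof -
    have "card {i \<in> insert b A. j < i} = Suc (card {i \<in> A. j < i})" if "j \<in> A" for j
    proof -
      have "{i \<in> insert b A. j < i} = insert b {i \<in> A. j < i}" using insert that by auto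
      then show ?thesis using bA insert by (simp add: card_insert_if)
    qed
    then show ?thesis by (simp add: sum_distrib_left)
  qed
  also have "\<dots> = qnum q (card (insert b A))" using insert bA by (simp add: qnum_Suc_shift)
  finally show ?case .
qed simp

lemma length_insert_fixed [simp]: "length (insert_fixed p xs) = Suc (length xs)"
  by (simp add: insert_fixed_def)

lemma nth_insert_fixed:
  assumes "p \<le> length xs" "i < Suc (length xs)"
  shows "insert_fixed p xs ! i = (if i < p then shift_up (Suc p) (xs!i)
    else if i = p then Suc p else shift_up (Suc p) (xs!(i-1)))"
  using assms by (auto simp: insert_fixed_def nth_append min_def nth_Cons')

lemma fixed_positions_insert_fixed:
  assumes "p \<le> length xs"
  shows "fixed_positions (insert_fixed p xs)
    = {i \<in> fixed_positions xs. i < p} \<union> {p} \<union> Suc ` {i \<in> fixed_positions xs. p \<le> i}"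
proof -
  have "i \<in> fixed_positions (insert_fixed p xs) \<longleftrightarrow>
      i \<in> {i \<in> fixed_positions xs. i < p} \<union> {p} \<union> Suc ` {i \<in> fixed_positions xs. p \<le> i}" for i
  proof -
    consider "i < p" | "i = p" | k where "i = Suc k" "p \<le> k"
      by (metis Suc_pred' less_Suc_eq_le linorder_neqE_nat not_less0)
    then show ?thesis
      by cases (use assms in \<open>auto simp: fixed_positions_def nth_insert_fixed shift_up_def
          image_iff split: if_splits\<close>)
  qed
  then show ?thesis by blast
qed

lemma fix_count_insert_fixed:
  assumes "p \<le> length xs"
  shows "fix_count (insert_fixed p xs) = Suc (fix_count xs)"
proof -
  have "fixed_positions xs = {i \<in> fixed_positions xs. i < p} \<union> {i \<in> fixed_positions xs. p \<le> i}"
    by auto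
  then have "card (fixed_positions xs)
      = card {i \<in> fixed_positions xs. i < p} + card {i \<in> fixed_positions xs. p \<le> i}"
    by (metis (no_types, lifting) card_Un_disjoint finite_Un finite_fixed_positions
        disjoint_iff_not_equal leD mem_Collect_eq)
  moreover have "card (fixed_positions (insert_fixed p xs))
      = card {i \<in> fixed_positions xs. i < p} + Suc (card {i \<in> fixed_positions xs. p \<le> i})"
    unfolding fixed_positions_insert_fixed[OF assms]
    by (subst card_Un_disjoint; auto simp: card_image card_insert_if)
  ultimately show ?thesis by (simp add: fix_count_def)
qed

lemma card_fixed_positions_after_insert_fixed:
  assumes "p \<le> length xs"
  shows "card {i \<in> fixed_positions (insert_fixed p xs). p < i} = card {i \<in> fixed_positions xs. p \<le> i}"
proof -
  have "{i \<in> fixed_positions (insert_fixed p xs). p < i} = Suc ` {i \<in> fixed_positions xs. p \<le> i}"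
    unfolding fixed_positions_insert_fixed[OF assms] by auto
  then show ?thesis by (simp add: card_image)
qed

lemma insertion_exp_eq:
  "p \<le> length xs \<Longrightarrow>
    insertion_exp xs p = maj_list (insert_fixed p xs) + card {i \<in> fixed_positions (insert_fixed p xs). p < i}"
  by (simp add: insertion_exp_def fix_count_from_drop card_fixed_positions_after_insert_fixed)

lemma insert_fixed_perms:
  assumes xs: "xs \<in> perms n" and p: "p \<le> n"
  shows "insert_fixed p xs \<in> perms (Suc n)"
proof -
  have "inj (shift_up (Suc p))"
    using strict_mono_shift_up strict_mono_imp_inj_on by blast
  then have "distinct (map (shift_up (Suc p)) (take p xs) @ map (shift_up (Suc p)) (drop p xs))"
    using xs unfolding map_append[symmetric] by (simp add: permutations_of_set_def distinct_map inj_on_def inj_def)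
  moreover have "Suc p \<notin> set (map (shift_up (Suc p)) (take p xs) @ map (shift_up (Suc p)) (drop p xs))"
    by (auto simp: shift_up_def)
  ultimately have "distinct (insert_fixed p xs)"
    by (simp add: insert_fixed_def)
  moreover have "set (insert_fixed p xs) = insert (Suc p) (shift_up (Suc p) ` set xs)"
    unfolding insert_fixed_def
    by (metis append_take_drop_id image_Un list.simps(15) set_append set_map Un_insert_right)
  moreover have "set xs = {1..n}" using xs by (simp add: permutations_of_set_def)
  moreover have "insert (Suc p) (shift_up (Suc p) ` {1..n}) = {1..Suc n}"
  proof (intro equalityI subsetI)
    fix y assume y: "y \<in> {1..Suc n}"
    consider "y \<le> p" | "y = Suc p" | "Suc p < y" by linarith
    then show "y \<in> insert (Suc p) (shift_up (Suc p) ` {1..n})"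
    proof cases
      case 1
      then have "y = shift_up (Suc p) y" "y \<in> {1..n}" using y p by (auto simp: shift_up_def)
      then show ?thesis by blast
    next
      case 3
      then have "y = shift_up (Suc p) (y - 1)" "y - 1 \<in> {1..n}" using y by (auto simp: shift_up_def)
      then show ?thesis by blast
    qed simp
  qed (use p in \<open>auto simp: shift_up_def\<close>)
  ultimately show ?thesis by (simp add: permutations_of_set_def)
qed

lemma remove_insert_fixed:
  assumes "p \<le> length xs"
  shows "remove_fixed p (insert_fixed p xs) = xs"
proof -
  have "take p (insert_fixed p xs) = map (shift_up (Suc p)) (take p xs)"
    "drop (Suc p) (insert_fixed p xs) = map (shift_up (Suc p)) (drop p xs)"
    using assms by (simp_all add: insert_fixed_def)
  then show ?thesis
    by (simp add: remove_fixed_def map_idI o_def flip: map_append)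
qed

lemma shift_down_image:
  "shift_down (Suc p) ` ({1..Suc n} - {Suc p}) = {1..n}" if "p \<le> n"
proof (intro equalityI subsetI)
  fix y assume y: "y \<in> {1..n}"
  show "y \<in> shift_down (Suc p) ` ({1..Suc n} - {Suc p})"
  proof (cases "y \<le> p")
    case True
    then have "y = shift_down (Suc p) y" "y \<in> {1..Suc n} - {Suc p}" using y by (auto simp: shift_down_def)
    then show ?thesis by blast
  next
    case False
    then have "y = shift_down (Suc p) (Suc y)" "Suc y \<in> {1..Suc n} - {Suc p}"
      using y by (auto simp: shift_down_def)
    then show ?thesis by blast
  qed
qed (use that in \<open>auto simp: shift_down_def\<close>)

lemma remove_fixed_perms:
  assumes ys: "ys \<in> perms (Suc n)" and p: "p \<le> n" "ys!p = Suc p"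
  shows "remove_fixed p ys \<in> perms n" and "insert_fixed p (remove_fixed p ys) = ys"
proof -
  have ly: "length ys = Suc n" using ys length_perms by blast
  define T where "T = take p ys"
  define D where "D = drop (Suc p) ys"
  have ys_eq: "ys = T @ Suc p # D"
    using p ly unfolding T_def D_def by (metis id_take_nth_drop le_imp_less_Suc)
  have lT: "length T = p" using ly p by (simp add: T_def)
  have dys: "distinct (T @ Suc p # D)" using ys ys_eq by (simp add: permutations_of_set_def)
  then have nT: "Suc p \<notin> set T" and nD: "Suc p \<notin> set D" by auto
  have r: "remove_fixed p ys = map (shift_down (Suc p)) (T @ D)"
    unfolding remove_fixed_def T_def D_def by simp
  show "insert_fixed p (remove_fixed p ys) = ys"
    unfolding r insert_fixed_def using lT nT nD
    by (simp add: ys_eq o_def) (auto intro!: map_idI shift_up_shift_down)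
  have "inj_on (shift_down (Suc p)) {x. x \<noteq> Suc p}"
    by (auto simp: inj_on_def shift_down_def split: if_splits)
  then have "inj_on (shift_down (Suc p)) (set (T @ D))"
    using nT nD by (auto intro: inj_on_subset)
  moreover have "distinct (T @ D)" using dys by auto
  ultimately have "distinct (remove_fixed p ys)" unfolding r by (simp only: distinct_map)
  moreover have "set (T @ D) = {1..Suc n} - {Suc p}"
    using ys dys unfolding ys_eq by (auto simp: permutations_of_set_def)
  then have "set (remove_fixed p ys) = {1..n}"
    unfolding r set_map using shift_down_image[OF p(1)] by simp
  ultimately show "remove_fixed p ys \<in> perms n" by (simp add: permutations_of_set_def)
qed

text \<open>The \<open>p\<close> entries in front of the new value \<open>p + 1\<close> contain as many values \<open>> p\<close> as the
  entries behind it contain values \<open>\<le> p\<close>; so the new inversions come in equal pairs.\<close>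
lemma inv_list_insert_fixed:
  assumes xs: "xs \<in> perms n" and p: "p \<le> n"
  shows "inv_list (insert_fixed p xs) = inv_list xs + 2 * length (filter (\<lambda>y. y < Suc p) (drop p xs))"
proof -
  define A where "A = take p xs"
  define B where "B = drop p xs"
  have lA: "length A = p" using p length_perms[OF xs] by (simp add: A_def)
  have "filter (\<lambda>y. y < Suc p) (map (shift_up (Suc p)) B)
      = map (shift_up (Suc p)) (filter (\<lambda>y. y < Suc p) B)"
    by (induction B) (auto simp: shift_up_def)
  moreover have "length (filter (\<lambda>x. Suc p < x) (map (shift_up (Suc p)) A))
      = length (filter (\<lambda>x. \<not> x < Suc p) A)"
    by (induction A) (auto simp: shift_up_def)
  ultimately have ins: "inv_list (insert_fixed p xs) = inv_list A + inv_list B + cross_inv A B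
     + length (filter (\<lambda>y. y < Suc p) B) + length (filter (\<lambda>x. \<not> x < Suc p) A)"
    by (simp add: insert_fixed_def A_def[symmetric] B_def[symmetric] inv_list_append
        cross_inv_Cons_right inv_list_map cross_inv_map strict_mono_shift_up)
  have "set (filter (\<lambda>y. y < Suc p) xs) = {1..p}" "distinct (filter (\<lambda>y. y < Suc p) xs)"
    using xs p by (auto simp: permutations_of_set_def)
  then have "length (filter (\<lambda>y. y < Suc p) xs) = p"
    using distinct_card[of "filter (\<lambda>y. y < Suc p) xs"] by simp
  then have "length (filter (\<lambda>y. y < Suc p) A) + length (filter (\<lambda>y. y < Suc p) B) = p"
    unfolding A_def B_def by (metis append_take_drop_id filter_append length_append)
  moreover have "length (filter (\<lambda>y. y < Suc p) A) + length (filter (\<lambda>y. \<not> y < Suc p) A) = p"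
    using sum_length_filter_compl[of "\<lambda>y. y < Suc p" A] lA by simp
  moreover have "inv_list xs = inv_list A + inv_list B + cross_inv A B"
    unfolding A_def B_def by (metis append_take_drop_id inv_list_append)
  ultimately show ?thesis using ins by (simp add: B_def)
qed

definition sign_maj :: "'a::comm_ring_1 \<Rightarrow> nat list \<Rightarrow> 'a" where
  "sign_maj q ys = (-1) ^ inv_list ys * q ^ maj_list ys"

lemma sum_sign_maj_insert_fixed:
  fixes q :: "'a::comm_ring_1"
  assumes xs: "xs \<in> perms n"
  shows "qnum q (Suc n) * sign_maj q xs = (\<Sum>p=0..n.
    sign_maj q (insert_fixed p xs) * q ^ card {i \<in> fixed_positions (insert_fixed p xs). p < i})"
proof -
  have n: "length xs = n" using length_perms xs by blast
  have "qnum q (Suc n) * sign_maj q xs = (-1) ^ inv_list xs * (\<Sum>p=0..n. q ^ insertion_exp xs p)"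
    using sum_insertion_exp[OF perms_bounds[OF xs] n[symmetric], of q] by (simp add: sign_maj_def)
  also have "\<dots> = (\<Sum>p=0..n.
      sign_maj q (insert_fixed p xs) * q ^ card {i \<in> fixed_positions (insert_fixed p xs). p < i})"
    unfolding sum_distrib_left
  proof (rule sum.cong [OF refl])
    fix p assume p: "p \<in> {0..n}"
    then have "(-1::'a) ^ inv_list (insert_fixed p xs) = (-1) ^ inv_list xs"
      using inv_list_insert_fixed[OF xs] by (simp add: power_add power_mult)
    then show "(-1) ^ inv_list xs * q ^ insertion_exp xs p
        = sign_maj q (insert_fixed p xs) * q ^ card {i \<in> fixed_positions (insert_fixed p xs). p < i}"
      using p n by (simp add: insertion_exp_eq sign_maj_def power_add)
  qed
  finally show ?thesis .
qed

lemma bij_betw_insert_fixed: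
  "bij_betw (\<lambda>(xs, p). (insert_fixed p xs, p))
     ({xs \<in> perms n. fix_count xs = m} \<times> {0..n})
     (Sigma {ys \<in> perms (Suc n). fix_count ys = Suc m} fixed_positions)"
proof -
  have insert_fixed_in: "insert_fixed p xs \<in> perms (Suc n)" "p \<in> fixed_positions (insert_fixed p xs)"
    "remove_fixed p (insert_fixed p xs) = xs" "fix_count (insert_fixed p xs) = Suc (fix_count xs)"
    if "xs \<in> perms n" "p \<le> n" for xs p
    using that length_perms[OF that(1)] insert_fixed_perms remove_insert_fixed fix_count_insert_fixed
      fixed_positions_insert_fixed by auto
  have remove_fixed_in: "remove_fixed p ys \<in> perms n" "p \<le> n"
    "insert_fixed p (remove_fixed p ys) = ys" "fix_count ys = Suc (fix_count (remove_fixed p ys))"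
    if "ys \<in> perms (Suc n)" "p \<in> fixed_positions ys" for ys p
  proof -
    have "p \<le> n" "ys!p = Suc p"
      using that length_perms[OF that(1)] by (auto simp: fixed_positions_def)
    then show "remove_fixed p ys \<in> perms n" "p \<le> n" "insert_fixed p (remove_fixed p ys) = ys"
      using remove_fixed_perms that by auto
    then show "fix_count ys = Suc (fix_count (remove_fixed p ys))"
      by (metis fix_count_insert_fixed length_perms)
  qed
  show ?thesis
    by (rule bij_betw_byWitness[where f' = "\<lambda>(ys, p). (remove_fixed p ys, p)"])
      (use insert_fixed_in remove_fixed_in in fastforce)+
qed

lemma sum_sign_maj_fix_count_Suc:
  fixes q :: "'a::comm_ring_1"
  shows "qnum q (Suc m) * (\<Sum>ys | ys \<in> perms (Suc n) \<and> fix_count ys = Suc m. sign_maj q ys)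
    = qnum q (Suc n) * (\<Sum>xs | xs \<in> perms n \<and> fix_count xs = m. sign_maj q xs)"
proof -
  define h where "h = (\<lambda>(ys, p). sign_maj q ys * q ^ card {i \<in> fixed_positions ys. p < i})"
  have "qnum q (Suc n) * (\<Sum>xs | xs \<in> perms n \<and> fix_count xs = m. sign_maj q xs)
      = (\<Sum>xs | xs \<in> perms n \<and> fix_count xs = m. \<Sum>p=0..n. h (insert_fixed p xs, p))"
    unfolding sum_distrib_left h_def by (rule sum.cong) (simp_all add: sum_sign_maj_insert_fixed)
  also have "\<dots> = (\<Sum>(xs, p) \<in> {xs \<in> perms n. fix_count xs = m} \<times> {0..n}. h (insert_fixed p xs, p))"
    by (rule sum.cartesian_product)
  also have "\<dots> = (\<Sum>(ys, p) \<in> Sigma {ys \<in> perms (Suc n). fix_count ys = Suc m} fixed_positions. h (ys, p))"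
    using sum.reindex_bij_betw[OF bij_betw_insert_fixed, of h]
    by (simp add: case_prod_beta')
  also have "\<dots> = (\<Sum>ys | ys \<in> perms (Suc n) \<and> fix_count ys = Suc m. \<Sum>p\<in>fixed_positions ys. h (ys, p))"
    by (rule sum.Sigma [symmetric]) auto
  also have "\<dots> = (\<Sum>ys | ys \<in> perms (Suc n) \<and> fix_count ys = Suc m. sign_maj q ys * qnum q (Suc m))"
    by (rule sum.cong [OF refl])
      (simp add: h_def sum_distrib_left [symmetric] sum_power_card_greater fix_count_def)
  finally show ?thesis by (simp add: sum_distrib_left mult.commute)
qed

section \<open>Exchanging two consecutive values\<close>

abbreviation swap_next :: "nat \<Rightarrow> nat \<Rightarrow> nat" where
  "swap_next a \<equiv> Transposition.transpose a (Suc a)"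

fun adjacent_values :: "nat \<Rightarrow> nat list \<Rightarrow> bool" where
  "adjacent_values a (x # y # zs)
     = (x = a \<and> y = Suc a \<or> x = Suc a \<and> y = a \<or> adjacent_values a (y # zs))"
| "adjacent_values a _ = False"

lemma adjacent_values_Cons: "adjacent_values a (x # ys)
  = (ys \<noteq> [] \<and> (x = a \<and> hd ys = Suc a \<or> x = Suc a \<and> hd ys = a) \<or> adjacent_values a ys)"
  by (cases ys) auto

lemma adjacent_values_swap_next: "adjacent_values a (map (swap_next a) ys) = adjacent_values a ys"
  by (induction ys rule: adjacent_values.induct) (auto simp: transpose_def)

lemma des_maj_list_swap_next:
  assumes "\<not> adjacent_values a ys"
  shows "des_list (map (swap_next a) ys) = des_list ys \<and> maj_list (map (swap_next a) ys) = maj_list ys"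
  using assms
proof (induction ys)
  case (Cons x ys)
  then have IH: "des_list (map (swap_next a) ys) = des_list ys \<and> maj_list (map (swap_next a) ys) = maj_list ys"
    by (simp add: adjacent_values_Cons)
  show ?case
  proof (cases ys)
    case (Cons y zs)
    then have "(swap_next a y < swap_next a x) = (y < x)"
      using \<open>\<not> adjacent_values a (x # ys)\<close> by (auto simp: transpose_def)
    then show ?thesis using IH Cons by (simp add: des_list_Cons maj_list_Cons)
  qed simp
qed simp

lemma length_filter_less_or_eq:
  "distinct ys \<Longrightarrow> \<not> b < a \<Longrightarrow> length (filter (\<lambda>y. y < a \<or> y = b) ys)
    = length (filter (\<lambda>y. y < a) ys) + (if b \<in> set ys then 1 else 0)"
  by (induction ys) auto

lemma length_filter_swap_next_less_Suc:
  assumes "a \<notin> set ys" "distinct ys"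
  shows "length (filter (\<lambda>y. swap_next a y < Suc a) ys)
    = length (filter (\<lambda>y. y < a) ys) + (if Suc a \<in> set ys then 1 else 0)"
proof -
  have "filter (\<lambda>y. swap_next a y < Suc a) ys = filter (\<lambda>y. y < a \<or> y = Suc a) ys"
    using assms by (intro filter_cong) (auto simp: transpose_def)
  then show ?thesis using length_filter_less_or_eq[OF assms(2), of "Suc a" a] by simp
qed

lemma length_filter_less_Suc_swap_next:
  assumes "Suc a \<notin> set ys" "distinct ys"
  shows "length (filter (\<lambda>y. y < Suc a) ys)
    = length (filter (\<lambda>y. swap_next a y < a) ys) + (if a \<in> set ys then 1 else 0)"
proof -
  have "filter (\<lambda>y. y < Suc a) ys = filter (\<lambda>y. y < a \<or> y = a) ys"
    by (intro filter_cong) auto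
  moreover have "filter (\<lambda>y. swap_next a y < a) ys = filter (\<lambda>y. y < a) ys"
    using assms by (intro filter_cong) (auto simp: transpose_def)
  ultimately show ?thesis using length_filter_less_or_eq[OF assms(2), of a a] by simp
qed

lemma length_filter_swap_next_less:
  "x \<noteq> a \<Longrightarrow> x \<noteq> Suc a \<Longrightarrow>
    length (filter (\<lambda>y. swap_next a y < x) ys) = length (filter (\<lambda>y. y < x) ys)"
  by (induction ys) (auto simp: transpose_def)

lemma sign_inv_list_swap_next:
  assumes "distinct ys"
  shows "(-1::'a::comm_ring_1) ^ inv_list (map (swap_next a) ys)
    = (if a \<in> set ys \<and> Suc a \<in> set ys then -1 else 1) * (-1) ^ inv_list ys"
  using assms
proof (induction ys)
  case (Cons x ys)
  have d: "distinct ys" "x \<notin> set ys" using Cons.prems by auto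
  note IH = Cons.IH[OF d(1)]
  have fm: "length (filter (\<lambda>y. y < swap_next a x) (map (swap_next a) ys))
      = length (filter (\<lambda>y. swap_next a y < swap_next a x) ys)"
    by (simp add: filter_map o_def)
  consider "x = a" | "x = Suc a" | "x \<noteq> a" "x \<noteq> Suc a" by blast
  then show ?case
  proof cases
    case 1
    then have "length (filter (\<lambda>y. y < swap_next a x) (map (swap_next a) ys))
        = length (filter (\<lambda>y. y < x) ys) + (if Suc a \<in> set ys then 1 else 0)"
      unfolding fm using length_filter_swap_next_less_Suc[of a ys] d by simp
    then show ?thesis using IH d 1 by (auto simp: power_add)
  next
    case 2
    then have "length (filter (\<lambda>y. y < x) ys)
        = length (filter (\<lambda>y. y < swap_next a x) (map (swap_next a) ys)) + (if a \<in> set ys then 1 else 0)"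
      unfolding fm using length_filter_less_Suc_swap_next[of a ys] d by simp
    then show ?thesis using IH d 2 by (auto simp: power_add)
  next
    case 3
    then have "length (filter (\<lambda>y. y < swap_next a x) (map (swap_next a) ys))
        = length (filter (\<lambda>y. y < x) ys)"
      unfolding fm using length_filter_swap_next_less[of x a ys] by simp
    then show ?thesis using IH d 3 by (auto simp: power_add)
  qed
qed simp

lemma map_swap_next_perms:
  assumes "ys \<in> perms n" "Suc a \<le> n" "1 \<le> a"
  shows "map (swap_next a) ys \<in> perms n"
proof -
  have "swap_next a ` {1..n} = {1..n}" using assms by (intro transpose_image_eq) auto
  then show ?thesis
    using assms permutations_of_set_image_inj[of "swap_next a" "{1..n}"] by auto
qed

lemma sum_sign_maj_nonadjacent:
  fixes q :: "'a::comm_ring_1"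
  shows "(\<Sum>ys | ys \<in> perms (Suc (Suc m)) \<and> \<not> adjacent_values (Suc m) ys. sign_maj q ys) = 0"
proof (rule sum_involution_eq_0[where h = "map (swap_next (Suc m))"])
  fix ys assume "ys \<in> {ys. ys \<in> perms (Suc (Suc m)) \<and> \<not> adjacent_values (Suc m) ys}"
  then have ys: "distinct ys" "set ys = {1..Suc (Suc m)}" "\<not> adjacent_values (Suc m) ys"
    and perm: "ys \<in> perms (Suc (Suc m))"
    by (auto simp: permutations_of_set_def)
  show "sign_maj q (map (swap_next (Suc m)) ys) + sign_maj q ys = 0"
  proof -
    have "(-1::'a) ^ inv_list (map (swap_next (Suc m)) ys) = - ((-1) ^ inv_list ys)"
      using sign_inv_list_swap_next[OF ys(1), of "Suc m"] ys(2) by simp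
    then show ?thesis using des_maj_list_swap_next[OF ys(3)] unfolding sign_maj_def
      by (metis add.left_inverse mult_minus_left)
  qed
  show "map (swap_next (Suc m)) ys \<in> {ys. ys \<in> perms (Suc (Suc m)) \<and> \<not> adjacent_values (Suc m) ys}"
    using map_swap_next_perms[OF perm, of "Suc m"] ys(3) by (simp add: adjacent_values_swap_next)
  show "map (swap_next (Suc m)) (map (swap_next (Suc m)) ys) = ys"
    by (simp add: map_idI)
  have "Suc m \<in> set ys" using ys(2) by simp
  then obtain i where "i < length ys" "ys ! i = Suc m" by (auto simp: in_set_conv_nth)
  then show "map (swap_next (Suc m)) ys \<noteq> ys"
    by (metis nth_map transpose_apply_first n_not_Suc_n)
qed

section \<open>Inserting a block of two consecutive values\<close>

definition insert_block :: "nat \<Rightarrow> bool \<Rightarrow> nat \<Rightarrow> nat list \<Rightarrow> nat list" where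
  "insert_block m b g xs =
     take g xs @ (if b then [Suc m, Suc (Suc m)] else [Suc (Suc m), Suc m]) @ drop g xs"

lemma perms_le: "xs \<in> perms m \<Longrightarrow> x \<in> set xs \<Longrightarrow> x \<le> m"
  by (auto simp: permutations_of_set_def)

lemma insert_block_perms:
  assumes "xs \<in> perms m"
  shows "insert_block m b g xs \<in> perms (Suc (Suc m))"
proof -
  have "distinct (take g xs @ drop g xs)" using assms by (simp add: permutations_of_set_def)
  then have dp: "distinct (take g xs)" "distinct (drop g xs)" "set (take g xs) \<inter> set (drop g xs) = {}"
    by (simp_all only: distinct_append)
  have "set (take g xs) \<union> set (drop g xs) = {1..m}"
    using assms unfolding set_append[symmetric] append_take_drop_id
    by (simp add: permutations_of_set_def)
  moreover have "\<forall>x\<in>set (take g xs). x \<le> m" "\<forall>x\<in>set (drop g xs). x \<le> m"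
    using perms_le[OF assms] by (auto dest: in_set_takeD in_set_dropD)
  ultimately show ?thesis
    unfolding permutations_of_set_def insert_block_def using dp
    by (auto simp del: distinct_take distinct_drop)
qed

lemma adjacent_values_insert_block: "adjacent_values (Suc m) (insert_block m b g xs)"
proof -
  have "adjacent_values (Suc m) (T @ c1 # c2 # D)"
    if "c1 = Suc m \<and> c2 = Suc (Suc m) \<or> c1 = Suc (Suc m) \<and> c2 = Suc m" for T D c1 c2
    using that by (induction T) (auto simp: adjacent_values_Cons)
  then show ?thesis unfolding insert_block_def by auto
qed

lemma insert_block_components:
  assumes "xs \<in> perms m" "g \<le> m"
  shows "filter (\<lambda>x. x \<le> m) (insert_block m b g xs) = xs"
    and "length (takeWhile (\<lambda>x. x \<le> m) (insert_block m b g xs)) = g"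
    and "(insert_block m b g xs ! g = Suc m) = b"
proof -
  have "length (take g xs) = g" using assms length_perms by fastforce
  moreover have "\<forall>x\<in>set (take g xs). x \<le> m" "\<forall>x\<in>set (drop g xs). x \<le> m"
    using perms_le[OF assms(1)] by (auto dest: in_set_takeD in_set_dropD)
  ultimately show "filter (\<lambda>x. x \<le> m) (insert_block m b g xs) = xs"
    "length (takeWhile (\<lambda>x. x \<le> m) (insert_block m b g xs)) = g"
    "(insert_block m b g xs ! g = Suc m) = b"
    by (simp_all add: insert_block_def takeWhile_append2 nth_append)
qed

lemma adjacent_values_decomp:
  "adjacent_values a ys \<Longrightarrow> \<exists>T D. ys = T @ [a, Suc a] @ D \<or> ys = T @ [Suc a, a] @ D"
proof (induction a ys rule: adjacent_values.induct)
  case (1 a x y zs)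
  show ?case
  proof (cases "x = a \<and> y = Suc a \<or> x = Suc a \<and> y = a")
    case True
    then show ?thesis by (metis append_Nil append_Cons)
  next
    case False
    then obtain T D where "y # zs = T @ [a, Suc a] @ D \<or> y # zs = T @ [Suc a, a] @ D"
      using 1 by auto
    then show ?thesis by (metis append_Cons)
  qed
qed auto

lemma insert_block_inverse:
  assumes "ys \<in> perms (Suc (Suc m))" "adjacent_values (Suc m) ys"
  defines "g \<equiv> length (takeWhile (\<lambda>x. x \<le> m) ys)"
  shows "insert_block m (ys ! g = Suc m) g (filter (\<lambda>x. x \<le> m) ys) = ys"
    and "filter (\<lambda>x. x \<le> m) ys \<in> perms m" and "g \<le> m"
proof -
  obtain T D c1 c2 where ys: "ys = T @ [c1, c2] @ D"
    and c: "c1 = Suc m \<and> c2 = Suc (Suc m) \<or> c1 = Suc (Suc m) \<and> c2 = Suc m"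
    using adjacent_values_decomp[OF assms(2)] by blast
  have d: "distinct (T @ [c1, c2] @ D)" and s: "set (T @ [c1, c2] @ D) = {1..Suc (Suc m)}"
    using assms(1) ys by (auto simp: permutations_of_set_def)
  have "x \<le> m" if "x \<in> set T \<union> set D" for x
  proof -
    have "x \<in> {1..Suc (Suc m)}" "x \<noteq> c1" "x \<noteq> c2" using that s d by auto
    then show ?thesis using c by auto
  qed
  then have f: "filter (\<lambda>x. x \<le> m) ys = T @ D" and gT: "g = length T"
    unfolding ys g_def using c by (auto simp: takeWhile_append2)
  show "insert_block m (ys ! g = Suc m) g (filter (\<lambda>x. x \<le> m) ys) = ys"
    unfolding f gT insert_block_def using c ys by (auto simp: nth_append)
  have "set (T @ D) = {1..Suc (Suc m)} - {c1, c2}" using s d by auto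
  also have "\<dots> = {1..m}" using c by auto
  finally show "filter (\<lambda>x. x \<le> m) ys \<in> perms m"
    unfolding f using d by (simp add: permutations_of_set_def)
  then show "g \<le> m" using gT f length_perms by fastforce
qed

lemma bij_betw_insert_block:
  "bij_betw (\<lambda>(xs, g, b). insert_block m b g xs) (perms m \<times> {0..m} \<times> UNIV)
     {ys \<in> perms (Suc (Suc m)). adjacent_values (Suc m) ys}"
proof (rule bij_betw_byWitness[where f' = "\<lambda>ys. (filter (\<lambda>x. x \<le> m) ys,
      length (takeWhile (\<lambda>x. x \<le> m) ys), ys ! length (takeWhile (\<lambda>x. x \<le> m) ys) = Suc m)"])
qed (use insert_block_inverse insert_block_components insert_block_perms
    adjacent_values_insert_block in \<open>force+\<close>)

lemma inv_list_insert_block: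
  assumes "xs \<in> perms m" "g \<le> m"
  shows "inv_list (insert_block m True g xs) = inv_list xs + 2 * (m - g)"
    and "inv_list (insert_block m False g xs) = Suc (inv_list (insert_block m True g xs))"
proof -
  define A where "A = take g xs"
  define B where "B = drop g xs"
  have "length B = m - g" using assms length_perms by (fastforce simp: B_def)
  moreover have "\<forall>x\<in>set A. x \<le> m" "\<forall>x\<in>set B. x \<le> m"
    using perms_le[OF assms(1)] by (auto simp: A_def B_def dest: in_set_takeD in_set_dropD)
  then have "filter (\<lambda>x. Suc m < x) A = []" "filter (\<lambda>x. Suc (Suc m) < x) A = []"
    "filter (\<lambda>y. y < Suc m) B = B" "filter (\<lambda>y. y < Suc (Suc m)) B = B"
    by (auto simp: filter_empty_conv filter_id_conv)
  moreover have "inv_list xs = inv_list A + inv_list B + cross_inv A B"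
    unfolding A_def B_def by (metis append_take_drop_id inv_list_append)
  moreover have "insert_block m True g xs = A @ Suc m # Suc (Suc m) # B"
    "insert_block m False g xs = A @ Suc (Suc m) # Suc m # B"
    by (simp_all add: insert_block_def A_def B_def)
  ultimately show "inv_list (insert_block m True g xs) = inv_list xs + 2 * (m - g)"
    "inv_list (insert_block m False g xs) = Suc (inv_list (insert_block m True g xs))"
    by (simp_all add: inv_list_append cross_inv_Cons_right)
qed

lemma maj_list_insert_block:
  assumes "xs \<in> perms m" "g \<le> m"
  shows "maj_list (insert_block m False g xs) = maj_list (insert_block m True g xs) + Suc g"
    and "g < m \<Longrightarrow> maj_list (insert_block m True g xs) + (if 0 < g \<and> xs!g < xs!(g-1) then g else 0)
        = maj_list xs + 2 + 2 * des_list (drop g xs) + g"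
    and "g = m \<Longrightarrow> maj_list (insert_block m True g xs) = maj_list xs"
proof -
  define A where "A = take g xs"
  define B where "B = drop g xs"
  have xs: "xs = A @ B" by (simp add: A_def B_def)
  have lx: "length xs = m" using length_perms assms by blast
  have lA: "length A = g" and lB: "length B = m - g" using lx assms by (simp_all add: A_def B_def)
  have "\<forall>x\<in>set A. x \<le> m" "\<forall>x\<in>set B. x \<le> m"
    using perms_le[OF assms(1)] xs by auto
  then have lastA: "A \<noteq> [] \<Longrightarrow> last A \<le> m" and hdB: "B \<noteq> [] \<Longrightarrow> hd B \<le> m" by auto
  have blocks: "insert_block m True g xs = A @ Suc m # Suc (Suc m) # B"
    "insert_block m False g xs = A @ Suc (Suc m) # Suc m # B"
    by (simp_all add: insert_block_def A_def B_def)
  show "maj_list (insert_block m False g xs) = maj_list (insert_block m True g xs) + Suc g"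
    unfolding blocks maj_list_append using lastA hdB lA by (auto simp: maj_list_Cons des_list_Cons)
  show "g < m \<Longrightarrow> maj_list (insert_block m True g xs) + (if 0 < g \<and> xs!g < xs!(g-1) then g else 0)
        = maj_list xs + 2 + 2 * des_list (drop g xs) + g"
  proof -
    assume gm: "g < m"
    have Bn: "B \<noteq> []" and hd_B: "hd B = xs!g" using gm lB lx by (auto simp: B_def hd_drop_conv_nth)
    have last_A: "last A = xs!(g-1)" if "0 < g"
      using that gm lx unfolding A_def by (cases g) (simp_all add: take_Suc_conv_app_nth)
    have "maj_list xs = maj_list A + maj_list B + g * des_list B
        + (if A \<noteq> [] \<and> hd B < last A then g else 0)"
      unfolding xs maj_list_append lA using Bn by simp
    moreover have "maj_list (insert_block m True g xs)
        = maj_list A + (2 + 2 * des_list B + maj_list B) + g * Suc (des_list B)"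
      unfolding blocks maj_list_append using lastA hdB Bn lA by (auto simp: maj_list_Cons des_list_Cons)
    ultimately show ?thesis using hd_B last_A lA by (auto simp: B_def algebra_simps)
  qed
  show "g = m \<Longrightarrow> maj_list (insert_block m True g xs) = maj_list xs"
    using lB lastA unfolding blocks maj_list_append by (auto simp: maj_list_Cons des_list_Cons xs)
qed

definition even_geom :: "'a::comm_ring_1 \<Rightarrow> nat \<Rightarrow> 'a" where
  "even_geom q k = (\<Sum>j<k. q ^ (2 * j + 2))"

definition block_sum :: "'a::comm_ring_1 \<Rightarrow> nat \<Rightarrow> 'a" where
  "block_sum q m = (1 - q ^ Suc m) + (\<Sum>g<m. q ^ (g + 2) * (1 - q ^ Suc g))"

definition block_partial :: "'a::comm_ring_1 \<Rightarrow> nat \<Rightarrow> nat \<Rightarrow> nat \<Rightarrow> 'a" where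
  "block_partial q m h k = (1 - q ^ Suc m) + (\<Sum>g\<in>{h..<m}. q ^ (g + 2) * (1 - q ^ Suc g))
     + (1 - q ^ Suc h) * (1 - q ^ h) * even_geom q k"

lemma even_geom_closed: "even_geom q k * (1 - q^2) = q^2 - q^(2 * k + 2)"
proof (induction k)
  case (Suc k)
  have "even_geom q (Suc k) * (1 - q^2) = even_geom q k * (1 - q^2) + q^(2 * k + 2) * (1 - q^2)"
    by (simp add: even_geom_def algebra_simps)
  also have "\<dots> = q^2 - q^(2 * Suc k + 2)"
    unfolding Suc.IH by (simp add: algebra_simps flip: power_add)
  finally show ?case .
qed (simp add: even_geom_def power2_eq_square)

lemma block_partial_step_ascent:
  assumes "h < m"
  shows "block_partial q m h k = q^(h + 2 + 2 * k) * (1 - q ^ Suc h) + block_partial q m (Suc h) k"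
proof -
  define E where "E = even_geom q k"
  define X where "X = q^h"
  define Y where "Y = q^(2 * k)"
  have "q^(2 * k + 2) = q^2 * q^(2 * k)" by (simp only: power_add mult.commute)
  then have E: "E * (1 - q^2) = q^2 - q^2 * Y"
    using even_geom_closed[of q k] unfolding E_def Y_def by simp
  have "(1 - q*X) * (1 - X) * E + X*q^2 * (1 - q*X) - (X*q^2*Y * (1 - q*X) + (1 - q*q*X) * (1 - q*X) * E)
      = (1 - q*X) * X * (q^2 - q^2*Y - E * (1 - q^2))"
    by (simp add: algebra_simps power2_eq_square)
  also have "\<dots> = 0" using E by simp
  finally have "(1 - q*X) * (1 - X) * E + X*q^2 * (1 - q*X)
      = X*q^2*Y * (1 - q*X) + (1 - q*q*X) * (1 - q*X) * E"
    by simp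
  then have key: "(1 - q ^ Suc h) * (1 - q ^ h) * E + q^(h+2) * (1 - q ^ Suc h)
      = q^(h+2+2*k) * (1 - q ^ Suc h) + (1 - q ^ Suc (Suc h)) * (1 - q ^ Suc h) * E"
    unfolding X_def Y_def by (simp add: power_add power2_eq_square algebra_simps)
  define S where "S = (\<Sum>g\<in>{Suc h..<m}. q ^ (g+2) * (1 - q ^ Suc g))"
  have "(\<Sum>g\<in>{h..<m}. q ^ (g+2) * (1 - q ^ Suc g)) = q^(h+2) * (1 - q ^ Suc h) + S"
    using assms by (simp add: sum.atLeast_Suc_lessThan S_def)
  then have "block_partial q m h k
      = (1 - q ^ Suc m) + S + ((1 - q ^ Suc h) * (1 - q ^ h) * E + q^(h+2) * (1 - q ^ Suc h))"
    by (simp add: block_partial_def E_def algebra_simps)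
  also have "\<dots> = q^(h + 2 + 2 * k) * (1 - q ^ Suc h) + block_partial q m (Suc h) k"
    unfolding key by (simp add: block_partial_def E_def S_def algebra_simps)
  finally show ?thesis .
qed

lemma block_partial_step_descent:
  assumes "h < m"
  shows "block_partial q m h (Suc k) = q^(2 + 2 * k) * (1 - q ^ Suc h) + block_partial q m (Suc h) k"
proof -
  have "block_partial q m h (Suc k) = block_partial q m h k + (1 - q ^ Suc h) * (1 - q ^ h) * q^(2*k+2)"
    unfolding block_partial_def even_geom_def by (simp add: algebra_simps)
  also have "\<dots> = q^(h+2+2*k) * (1 - q ^ Suc h) + block_partial q m (Suc h) k
      + (1 - q ^ Suc h) * (1 - q ^ h) * q^(2*k+2)"
    using block_partial_step_ascent[OF assms] by simp
  also have "\<dots> = q^(2+2*k) * (1 - q ^ Suc h) + block_partial q m (Suc h) k"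
    by (simp add: algebra_simps power_add)
  finally show ?thesis .
qed

lemma sum_insert_block_from:
  fixes q :: "'a::comm_ring_1"
  assumes xs: "xs \<in> perms m" and "h \<le> m"
  shows "(\<Sum>g=h..m. q ^ maj_list (insert_block m True g xs) * (1 - q ^ Suc g))
    = q ^ maj_list xs * block_partial q m h (des_list (drop (h - 1) xs))"
  using assms(2)
proof (induction h rule: inc_induct)
  case base
  have lx: "length xs = m" using length_perms xs by blast
  have "des_list (drop (m - 1) xs) = 0"
  proof (cases m)
    case (Suc k)
    then have "drop (m - 1) xs = [xs!k]"
      using lx by (metis Cons_nth_drop_Suc diff_Suc_1 drop_all le_refl lessI)
    then show ?thesis by simp
  qed (use lx in simp)
  then show ?case using maj_list_insert_block(3)[OF xs, of m] by (simp add: block_partial_def even_geom_def)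
next
  case (step h)
  have lx: "length xs = m" using length_perms xs by blast
  define k where "k = des_list (drop h xs)"
  have split: "(\<Sum>g=h..m. q ^ maj_list (insert_block m True g xs) * (1 - q ^ Suc g))
     = q ^ maj_list (insert_block m True h xs) * (1 - q ^ Suc h)
       + q ^ maj_list xs * block_partial q m (Suc h) k"
    using step by (simp add: sum.atLeast_Suc_atMost k_def)
  have maj: "maj_list (insert_block m True h xs) + (if 0 < h \<and> xs!h < xs!(h-1) then h else 0)
      = maj_list xs + 2 + 2 * k + h"
    using maj_list_insert_block(2)[OF xs, of h] step by (simp add: k_def)
  have des: "des_list (drop (h - 1) xs) = k + (if 0 < h \<and> xs!h < xs!(h-1) then 1 else 0)"
    using des_list_drop_pred[of h xs] step lx by (cases h) (simp_all add: k_def)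
  show ?case
  proof (cases "0 < h \<and> xs!h < xs!(h-1)")
    case True
    then have "maj_list (insert_block m True h xs) = maj_list xs + (2 + 2 * k)"
      and d: "des_list (drop (h - 1) xs) = Suc k" using maj des by auto
    then show ?thesis unfolding split d block_partial_step_descent[OF step(2)]
      by (simp add: power_add algebra_simps)
  next
    case False
    then have "maj_list (insert_block m True h xs) = maj_list xs + (h + 2 + 2 * k)"
      and d: "des_list (drop (h - 1) xs) = k" using maj des by auto
    then show ?thesis unfolding split d block_partial_step_ascent[OF step(2)]
      by (simp add: power_add algebra_simps)
  qed
qed

lemma sum_sign_maj_insert_block:
  fixes q :: "'a::comm_ring_1"
  assumes xs: "xs \<in> perms m"
  shows "(\<Sum>g=0..m. \<Sum>b\<in>UNIV. sign_maj q (insert_block m b g xs)) = sign_maj q xs * block_sum q m"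
proof -
  have "(\<Sum>b\<in>UNIV. sign_maj q (insert_block m b g xs))
      = (-1) ^ inv_list xs * (q ^ maj_list (insert_block m True g xs) * (1 - q ^ Suc g))"
    if "g \<le> m" for g
  proof -
    have "(-1::'a) ^ inv_list (insert_block m True g xs) = (-1) ^ inv_list xs"
      using inv_list_insert_block(1)[OF xs that] by (simp add: power_add power_mult)
    moreover have "(-1::'a) ^ inv_list (insert_block m False g xs) = - ((-1) ^ inv_list xs)"
      using inv_list_insert_block(2)[OF xs that] calculation by simp
    ultimately show ?thesis
      by (simp add: UNIV_bool sign_maj_def maj_list_insert_block(1)[OF xs that] algebra_simps power_add)
  qed
  then have "(\<Sum>g=0..m. \<Sum>b\<in>UNIV. sign_maj q (insert_block m b g xs))
      = (-1) ^ inv_list xs * (\<Sum>g=0..m. q ^ maj_list (insert_block m True g xs) * (1 - q ^ Suc g))"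
    by (simp add: sum_distrib_left)
  also have "\<dots> = sign_maj q xs * block_sum q m"
    using sum_insert_block_from[OF xs, of 0 q]
    by (simp add: sign_maj_def block_partial_def block_sum_def atLeast0LessThan)
  finally show ?thesis .
qed

lemma block_sum_closed: "(1 + q) * block_sum q m = (1 - q) * qnum q (Suc m) * qnum q (Suc (Suc m))"
proof (induction m)
  case 0
  then show ?case by (simp add: block_sum_def qnum_def algebra_simps)
next
  case (Suc m)
  have "q ^ (2 * m + 3) = q ^ (m + 2) * q ^ Suc m" "q ^ (2 * m + 3) = q ^ Suc m * q ^ Suc (Suc m)"
    by (simp_all only: power_add [symmetric]) (rule arg_cong [where f = "(^) q"], simp)+
  note pow = this
  have "block_sum q (Suc m) = block_sum q m + (q ^ Suc m - q ^ (2 * m + 3))"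
    unfolding block_sum_def pow(1) by (simp add: algebra_simps)
  then have "(1 + q) * block_sum q (Suc m)
      = (1 + q) * block_sum q m + (1 + q) * (q ^ Suc m - q ^ (2 * m + 3))"
    by (simp add: distrib_left)
  also have "\<dots> = (1 - q) * qnum q (Suc m) * qnum q (Suc (Suc m))
      + (1 - q) * qnum q (Suc (Suc m)) * (q ^ Suc m + q ^ Suc (Suc m))"
    unfolding Suc.IH mult.assoc one_minus_q_mult_qnum pow(2) by (simp add: algebra_simps)
  also have "\<dots> = (1 - q) * qnum q (Suc (Suc m)) * qnum q (Suc (Suc (Suc m)))"
    by (simp add: qnum_Suc [of q "Suc m"] qnum_Suc [of q "Suc (Suc m)"] algebra_simps)
  finally show ?case .
qed

lemma sum_sign_maj_perms_Suc_Suc: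
  fixes q :: "'a::comm_ring_1"
  shows "(\<Sum>ys\<in>perms (Suc (Suc m)). sign_maj q ys) = block_sum q m * (\<Sum>xs\<in>perms m. sign_maj q xs)"
proof -
  define Adj where "Adj = {ys \<in> perms (Suc (Suc m)). adjacent_values (Suc m) ys}"
  define Non where "Non = {ys \<in> perms (Suc (Suc m)). \<not> adjacent_values (Suc m) ys}"
  have "perms (Suc (Suc m)) = Adj \<union> Non" "Adj \<inter> Non = {}" "finite Adj" "finite Non"
    by (auto simp: Adj_def Non_def)
  then have "(\<Sum>ys\<in>perms (Suc (Suc m)). sign_maj q ys)
      = (\<Sum>ys\<in>Adj. sign_maj q ys) + (\<Sum>ys\<in>Non. sign_maj q ys)"
    by (simp add: sum.union_disjoint)
  also have "\<dots> = (\<Sum>(xs, g, b) \<in> perms m \<times> {0..m} \<times> UNIV. sign_maj q (insert_block m b g xs))"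
    using sum.reindex_bij_betw[OF bij_betw_insert_block, of "sign_maj q"] sum_sign_maj_nonadjacent
    by (simp add: Adj_def Non_def case_prod_beta')
  also have "\<dots> = (\<Sum>xs\<in>perms m. \<Sum>g=0..m. \<Sum>b\<in>UNIV. sign_maj q (insert_block m b g xs))"
    by (simp add: sum.cartesian_product)
  also have "\<dots> = block_sum q m * (\<Sum>xs\<in>perms m. sign_maj q xs)"
    by (simp add: sum_sign_maj_insert_block sum_distrib_left mult.commute)
  finally show ?thesis .
qed
section \<open>From permutations to lists\<close>

lemma maj_list_snoc:
  "maj_list (xs @ [y]) = maj_list xs + (if xs \<noteq> [] \<and> y < last xs then length xs else 0)"
  by (simp add: maj_list_append)

lemma maj_list_eq_sum: "maj_list xs = (\<Sum>i\<in>{1..<length xs}. if xs!i < xs!(i-1) then i else 0)"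
proof (induction xs rule: rev_induct)
  case (snoc y xs)
  define f where "f = (\<lambda>i. if (xs @ [y])!i < (xs @ [y])!(i-1) then i else (0::nat))"
  show ?case
  proof (cases "xs = []")
    case False
    have "(\<Sum>i\<in>{1..<length (xs @ [y])}. f i) = (\<Sum>i\<in>{1..<length xs}. f i) + f (length xs)"
      using False by (simp add: sum.atLeastLessThan_Suc Suc_le_eq)
    also have "f (length xs) = (if y < last xs then length xs else 0)"
      using False by (simp add: f_def nth_append last_conv_nth)
    also have "(\<Sum>i\<in>{1..<length xs}. f i) = (\<Sum>i\<in>{1..<length xs}. if xs!i < xs!(i-1) then i else 0)"
      by (rule sum.cong) (auto simp: f_def nth_append)
    finally show ?thesis using snoc False by (simp add: maj_list_snoc f_def)
  qed simp
qed simp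

lemma inv_list_card: "inv_list xs = card {(i, j). i < j \<and> j < length xs \<and> xs!j < xs!i}"
proof (induction xs)
  case (Cons x xs)
  define P where "P = {(i, j). i < j \<and> j < length xs \<and> xs!j < xs!i}"
  have e: "{(i, j). i < j \<and> j < length (x # xs) \<and> (x # xs)!j < (x # xs)!i}
     = (\<lambda>j. (0, Suc j)) ` {j. j < length xs \<and> xs!j < x} \<union> (\<lambda>(i, j). (Suc i, Suc j)) ` P"
  proof (rule set_eqI)
    fix ij :: "nat \<times> nat"
    obtain i j where ij: "ij = (i, j)" by (cases ij)
    show "ij \<in> {(i, j). i < j \<and> j < length (x # xs) \<and> (x # xs)!j < (x # xs)!i} \<longleftrightarrow>
        ij \<in> (\<lambda>j. (0, Suc j)) ` {j. j < length xs \<and> xs!j < x} \<union> (\<lambda>(i, j). (Suc i, Suc j)) ` P"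
      unfolding ij P_def by (cases i; cases j) (auto simp: image_iff)
  qed
  have "finite P"
    unfolding P_def by (rule finite_subset[of _ "{..<length xs} \<times> {..<length xs}"]) auto
  moreover have "card ((\<lambda>j. (0::nat, Suc j)) ` {j. j < length xs \<and> xs!j < x})
      = length (filter (\<lambda>y. y < x) xs)"
    by (subst card_image) (auto simp: inj_on_def length_filter_conv_card)
  moreover have "card ((\<lambda>(i, j). (Suc i, Suc j)) ` P) = card P"
    by (rule card_image) (auto simp: inj_on_def)
  ultimately show ?case unfolding e using Cons.IH
    by (subst card_Un_disjoint) (auto simp: P_def)
qed simp

definition perm_list :: "nat \<Rightarrow> (nat \<Rightarrow> nat) \<Rightarrow> nat list" where
  "perm_list n \<sigma> = map \<sigma> [1..<Suc n]"

definition list_perm :: "nat \<Rightarrow> nat list \<Rightarrow> nat \<Rightarrow> nat" where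
  "list_perm n xs = (\<lambda>i. if i \<in> {1..n} then xs!(i-1) else i)"

lemma length_perm_list [simp]: "length (perm_list n \<sigma>) = n"
  by (simp add: perm_list_def del: upt_Suc)

lemma nth_perm_list [simp]: "i < n \<Longrightarrow> perm_list n \<sigma> ! i = \<sigma> (Suc i)"
  by (simp add: perm_list_def del: upt_Suc)

lemma maj_eq_maj_list: "maj n \<sigma> = maj_list (perm_list n \<sigma>)"
proof -
  have "maj_list (perm_list n \<sigma>) = (\<Sum>i\<in>{1..<n}. if \<sigma> (Suc i) < \<sigma> i then i else 0)"
    unfolding maj_list_eq_sum by (rule sum.cong) auto
  also have "\<dots> = (\<Sum>i\<in>{i\<in>{1..<n}. \<sigma> (Suc i) < \<sigma> i}. i)"
    by (rule sum.inter_filter [symmetric]) simp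
  also have "{i\<in>{1..<n}. \<sigma> (Suc i) < \<sigma> i} = {i. 1 \<le> i \<and> i < n \<and> \<sigma> i > \<sigma> (Suc i)}"
    by auto
  finally show ?thesis by (simp add: maj_def)
qed

lemma inv_num_eq_inv_list: "inv_num n \<sigma> = inv_list (perm_list n \<sigma>)"
proof -
  have "inv_list (perm_list n \<sigma>) = card {(i, j). i < j \<and> j < n \<and> \<sigma> (Suc j) < \<sigma> (Suc i)}"
    unfolding inv_list_card by (rule arg_cong [where f = card]) auto
  also have "\<dots> = card ((\<lambda>(i, j). (Suc i, Suc j)) ` {(i, j). i < j \<and> j < n \<and> \<sigma> (Suc j) < \<sigma> (Suc i)})"
    by (rule card_image [symmetric]) (auto simp: inj_on_def)
  also have "(\<lambda>(i, j). (Suc i, Suc j)) ` {(i, j). i < j \<and> j < n \<and> \<sigma> (Suc j) < \<sigma> (Suc i)}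
      = {(i, j). i \<in> {1..n} \<and> j \<in> {1..n} \<and> i < j \<and> \<sigma> i > \<sigma> j}"
  proof (rule set_eqI)
    fix ij :: "nat \<times> nat"
    obtain i j where ij: "ij = (i, j)" by (cases ij)
    show "ij \<in> (\<lambda>(i, j). (Suc i, Suc j)) ` {(i, j). i < j \<and> j < n \<and> \<sigma> (Suc j) < \<sigma> (Suc i)} \<longleftrightarrow>
        ij \<in> {(i, j). i \<in> {1..n} \<and> j \<in> {1..n} \<and> i < j \<and> \<sigma> i > \<sigma> j}"
      unfolding ij by (cases i; cases j) (auto simp: image_iff)
  qed
  finally show ?thesis by (simp add: inv_num_def)
qed

lemma perm_list_perms:
  assumes "\<sigma> permutes {1..n}"
  shows "perm_list n \<sigma> \<in> perms n"
proof -
  have "set [1..<Suc n] = {1..n}" by auto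
  then show ?thesis
    using permutes_image[OF assms] permutes_inj_on[OF assms]
    by (simp add: perm_list_def permutations_of_set_def distinct_map del: upt_Suc)
qed

lemma list_perm_permutes:
  assumes xs: "xs \<in> perms n"
  shows "list_perm n xs permutes {1..n}"
proof -
  have l: "length xs = n" and dx: "distinct xs" and sx: "set xs = {1..n}"
    using length_perms xs by (auto simp: permutations_of_set_def)
  have inj: "inj_on (list_perm n xs) {1..n}"
  proof (rule inj_onI)
    fix i j assume ij: "i \<in> {1..n}" "j \<in> {1..n}" "list_perm n xs i = list_perm n xs j"
    then have "xs!(i-1) = xs!(j-1)" "i - 1 < length xs" "j - 1 < length xs"
      using l by (auto simp: list_perm_def)
    then have "i - 1 = j - 1" using dx nth_eq_iff_index_eq by blast
    then show "i = j" using ij(1,2) by auto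
  qed
  moreover have "list_perm n xs ` {1..n} \<subseteq> {1..n}"
  proof
    fix y assume "y \<in> list_perm n xs ` {1..n}"
    then obtain i where "i \<in> {1..n}" "y = xs!(i-1)" by (auto simp: list_perm_def)
    then have "y \<in> set xs" using l by auto
    then show "y \<in> {1..n}" using sx by simp
  qed
  ultimately have "bij_betw (list_perm n xs) {1..n} {1..n}"
    unfolding bij_betw_def using endo_inj_surj by blast
  then show ?thesis by (rule bij_imp_permutes) (auto simp: list_perm_def)
qed


lemma fix_count_perm_list_eq_0: "fix_count (perm_list n \<sigma>) = 0 \<longleftrightarrow> (\<forall>i\<in>{1..n}. \<sigma> i \<noteq> i)"
proof -
  have "fixed_positions (perm_list n \<sigma>) = {i. i < n \<and> \<sigma> (Suc i) = Suc i}"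
    by (auto simp: fixed_positions_def)
  then have "fix_count (perm_list n \<sigma>) = 0 \<longleftrightarrow> (\<forall>i\<in>{..<n}. \<sigma> (Suc i) \<noteq> Suc i)"
    by (auto simp: fix_count_def)
  also have "\<dots> \<longleftrightarrow> (\<forall>i\<in>Suc ` {..<n}. \<sigma> i \<noteq> i)" by simp
  finally show ?thesis by (simp add: image_Suc_lessThan)
qed

lemma bij_betw_perm_list_derangements:
  "bij_betw (perm_list n) (derangements n) {xs \<in> perms n. fix_count xs = 0}"
proof (rule bij_betw_byWitness[where f' = "list_perm n"])
  show "\<forall>\<sigma>\<in>derangements n. list_perm n (perm_list n \<sigma>) = \<sigma>"
  proof (intro ballI ext)
    fix \<sigma> i assume "\<sigma> \<in> derangements n"
    then have "\<sigma> permutes {1..n}" by (simp add: derangements_def)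
    then show "list_perm n (perm_list n \<sigma>) i = \<sigma> i"
      using permutes_not_in[of \<sigma> "{1..n}" i] by (cases i) (auto simp: list_perm_def)
  qed
  have list_perm_inverse: "perm_list n (list_perm n xs) = xs" if "xs \<in> perms n" for xs
  proof (rule nth_equalityI)
    show "length (perm_list n (list_perm n xs)) = length xs" using length_perms that by simp
  qed (simp add: list_perm_def)
  then show "\<forall>xs\<in>{xs \<in> perms n. fix_count xs = 0}. perm_list n (list_perm n xs) = xs"
    by blast
  show "perm_list n ` derangements n \<subseteq> {xs \<in> perms n. fix_count xs = 0}"
    using perm_list_perms fix_count_perm_list_eq_0 by (auto simp: derangements_def)
  show "list_perm n ` {xs \<in> perms n. fix_count xs = 0} \<subseteq> derangements n"
  proof safe
    fix xs assume xs: "xs \<in> perms n" "fix_count xs = 0"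
    then have "fix_count (perm_list n (list_perm n xs)) = 0" by (simp add: list_perm_inverse)
    then show "list_perm n xs \<in> derangements n"
      using list_perm_permutes[OF xs(1)] fix_count_perm_list_eq_0 by (simp add: derangements_def)
  qed
qed

section \<open>Closed forms\<close>

definition fix_weight :: "'a::comm_ring_1 \<Rightarrow> nat \<Rightarrow> nat \<Rightarrow> 'a" where
  "fix_weight q n k = (\<Sum>xs | xs \<in> perms n \<and> fix_count xs = k. sign_maj q xs)"

lemma fix_weight_reduce:
  "k \<le> n \<Longrightarrow> qfact q k * qfact q (n - k) * fix_weight q n k = qfact q n * fix_weight q (n - k) 0"
proof (induction k arbitrary: n)
  case (Suc k)
  then obtain n' where n: "n = Suc n'" by (cases n) auto
  have "qfact q (Suc k) * qfact q (n - Suc k) * fix_weight q n (Suc k)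
      = qfact q k * qfact q (n' - k) * (qnum q (Suc k) * fix_weight q (Suc n') (Suc k))"
    by (simp add: n qfact_Suc algebra_simps)
  also have "\<dots> = qnum q (Suc n') * (qfact q k * qfact q (n' - k) * fix_weight q n' k)"
    using sum_sign_maj_fix_count_Suc[of q k n'] by (simp add: fix_weight_def algebra_simps)
  also have "\<dots> = qfact q n * fix_weight q (n - Suc k) 0"
    using Suc n by (simp add: qfact_Suc algebra_simps)
  finally show ?case .
qed simp

lemma sum_sign_maj_eq_sum_fix_weight:
  "(\<Sum>xs\<in>perms n. sign_maj q xs) = (\<Sum>k=0..n. fix_weight q n k)"
proof -
  have "fix_count xs \<le> n" if "xs \<in> perms n" for xs
    using fix_count_le_length length_perms[OF that] by metis
  then show ?thesis unfolding fix_weight_def by (intro sum.group [symmetric]) auto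
qed

lemma sum_sign_maj_perms_closed:
  fixes q :: "'a::field"
  assumes "1 + q \<noteq> 0"
  shows "(\<Sum>xs\<in>perms n. sign_maj q xs) = qfact q n * ((1 - q) / (1 + q)) ^ (n div 2)"
proof (induction n rule: nat_less_induct)
  case (1 n)
  consider "n = 0" | "n = 1" | m where "n = Suc (Suc m)"
    by (metis One_nat_def not0_implies_Suc)
  then show ?case
  proof cases
    case 3
    have "block_sum q m = (1 - q) / (1 + q) * (qnum q (Suc m) * qnum q (Suc (Suc m)))"
      using block_sum_closed[of q m] assms by (simp add: field_simps)
    then show ?thesis using 1 3 sum_sign_maj_perms_Suc_Suc[of q m] by (simp add: qfact_Suc algebra_simps)
  qed (simp_all add: sign_maj_def qfact_Suc qnum_def)
qed

definition inv_qfact_prod :: "real \<Rightarrow> nat \<Rightarrow> nat \<Rightarrow> real" where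
  "inv_qfact_prod q n k = (if k \<le> n then 1 / (qfact q k * qfact q (n - k)) else 0)"

text \<open>The q-Pascal rule \<open>[n+1, k]\<^sub>q = q^k [n, k]\<^sub>q + [n, k-1]\<^sub>q\<close>, divided by \<open>[n+1]\<^sub>q!\<close>.\<close>
lemma inv_qfact_prod_pascal:
  assumes q: "q \<noteq> -1" and k: "0 < k"
  shows "qnum q (Suc n) * inv_qfact_prod q (Suc n) k
    = q ^ k * inv_qfact_prod q n k + inv_qfact_prod q n (k - 1)"
proof -
  consider "k \<le> n" | "k = Suc n" | "Suc n < k" by linarith
  then show ?thesis
  proof cases
    case 1
    obtain j where j: "k = Suc j" using k by (cases k) auto
    define a where "a = qfact q j"
    define b where "b = qfact q (n - Suc j)"
    define u where "u = qnum q (Suc j)"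
    define v where "v = qnum q (Suc (n - Suc j))"
    have jn: "Suc j \<le> n" using 1 j by simp
    have "Suc n - Suc j = Suc (n - Suc j)" using jn by simp
    then have w1: "inv_qfact_prod q (Suc n) k = 1 / (a * u * (b * v))"
      unfolding inv_qfact_prod_def j a_def b_def u_def v_def using jn by (simp add: qfact_Suc)
    have w2: "inv_qfact_prod q n k = 1 / (a * u * b)"
      unfolding inv_qfact_prod_def j a_def b_def u_def using jn by (simp add: qfact_Suc)
    have "n - j = Suc (n - Suc j)" using jn by simp
    then have w3: "inv_qfact_prod q n (k - 1) = 1 / (a * (b * v))"
      unfolding inv_qfact_prod_def j a_def b_def v_def using jn by (simp add: qfact_Suc)
    have "Suc n = Suc j + Suc (n - Suc j)" using jn by simp
    then have e: "qnum q (Suc n) = u + q ^ k * v"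
      using qnum_add[of q "Suc j" "Suc (n - Suc j)"] unfolding u_def v_def j by simp
    have "a \<noteq> 0" "b \<noteq> 0" "u \<noteq> 0" "v \<noteq> 0"
      using qfact_nonzero[OF q] qnum_nonzero[OF q] by (auto simp: a_def b_def u_def v_def)
    then show ?thesis unfolding w1 w2 w3 e by (simp add: field_simps)
  next
    case 2
    then show ?thesis using qfact_nonzero[OF q] qnum_nonzero[OF q, of "Suc n"]
      by (simp add: inv_qfact_prod_def qfact_Suc field_simps)
  qed (simp add: inv_qfact_prod_def)
qed

lemma inv_qfact_prod_pascal_0:
  assumes q: "q \<noteq> -1"
  shows "qnum q (Suc n) * inv_qfact_prod q (Suc n) 0 = inv_qfact_prod q n 0"
  using qfact_nonzero[OF q] qnum_nonzero[OF q]
  by (simp add: inv_qfact_prod_def qfact_Suc field_simps)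

definition gauss_poly :: "real \<Rightarrow> nat \<Rightarrow> real \<Rightarrow> real" where
  "gauss_poly q n x = (\<Sum>k=0..n. (-1) ^ k * q ^ (k choose 2) * x ^ k * inv_qfact_prod q n k)"

lemma choose2_Suc: "(Suc i choose 2) = (i choose 2) + i"
  by (simp add: numeral_2_eq_2)

lemma gauss_poly_rec:
  assumes q: "q \<noteq> -1"
  shows "qnum q (Suc n) * gauss_poly q (Suc n) x = (1 - x) * gauss_poly q n (q * x)"
proof -
  define f where "f = (\<lambda>k. (-1::real) ^ k * q ^ (k choose 2) * x ^ k)"
  have "gauss_poly q n (q * x) = (\<Sum>k=0..Suc n. f k * (q ^ k * inv_qfact_prod q n k))"
    unfolding gauss_poly_def f_def by (simp add: inv_qfact_prod_def power_mult_distrib algebra_simps)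
  then have G: "gauss_poly q n (q * x)
      = f 0 * inv_qfact_prod q n 0 + (\<Sum>i=0..n. f (Suc i) * (q ^ Suc i * inv_qfact_prod q n (Suc i)))"
    by (subst (asm) sum.atLeast0_atMost_Suc_shift) simp
  have "f (Suc i) = - x * ((-1) ^ i * q ^ (i choose 2) * (q * x) ^ i)" for i
    unfolding f_def choose2_Suc by (simp add: power_add power_mult_distrib algebra_simps)
  then have xG: "x * gauss_poly q n (q * x) = - (\<Sum>i=0..n. f (Suc i) * inv_qfact_prod q n i)"
    unfolding gauss_poly_def by (simp add: sum_distrib_left sum_negf algebra_simps)
  have "qnum q (Suc n) * gauss_poly q (Suc n) x
      = (\<Sum>k=0..Suc n. f k * (qnum q (Suc n) * inv_qfact_prod q (Suc n) k))"
    unfolding gauss_poly_def f_def by (simp add: sum_distrib_left algebra_simps)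
  also have "\<dots> = f 0 * (qnum q (Suc n) * inv_qfact_prod q (Suc n) 0)
      + (\<Sum>i=0..n. f (Suc i) * (qnum q (Suc n) * inv_qfact_prod q (Suc n) (Suc i)))"
    by (subst sum.atLeast0_atMost_Suc_shift) simp
  also have "\<dots> = f 0 * inv_qfact_prod q n 0
      + (\<Sum>i=0..n. f (Suc i) * (q ^ Suc i * inv_qfact_prod q n (Suc i) + inv_qfact_prod q n i))"
    using inv_qfact_prod_pascal_0[OF q] inv_qfact_prod_pascal[OF q] by simp
  also have "\<dots> = gauss_poly q n (q * x) - x * gauss_poly q n (q * x)"
    by (subst xG, subst G) (simp add: sum.distrib algebra_simps)
  finally show ?thesis by (simp add: algebra_simps)
qed

lemma gauss_poly_one:
  assumes q: "q \<noteq> -1" and n: "0 < n"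
  shows "gauss_poly q n 1 = 0"
proof -
  obtain m where m: "n = Suc m" using n by (cases n) auto
  have "qnum q (Suc m) * gauss_poly q (Suc m) 1 = 0" using gauss_poly_rec[OF q, of m 1] by simp
  then show ?thesis using qnum_nonzero[OF q, of "Suc m"] m by simp
qed

text \<open>With \<open>A = \<Sum> a n x^n\<close>, \<open>T = \<Sum> t n x^n\<close> and \<open>E = \<Sum> x^n/[n]\<^sub>q!\<close> the hypothesis says \<open>T = A E\<close>,
  and \<open>gauss_poly_one\<close> says that \<open>C = \<Sum> (-1)^n q^(n choose 2) x^n/[n]\<^sub>q!\<close> is the inverse of \<open>E\<close>.\<close>
lemma qexp_convolution_inverse:
  fixes q :: real and a t :: "nat \<Rightarrow> real"
  assumes q: "q \<noteq> -1" and t: "\<And>n. t n = (\<Sum>k=0..n. a (n - k) / qfact q k)"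
  shows "a n = (\<Sum>k=0..n. (-1) ^ k * q ^ (k choose 2) / qfact q k * t (n - k))"
proof -
  define C where "C = Abs_fps (\<lambda>k. (-1) ^ k * q ^ (k choose 2) / qfact q k)"
  define E where "E = Abs_fps (\<lambda>k. 1 / qfact q k)"
  have CE: "C * E = 1"
  proof (rule fps_ext)
    fix n
    have "fps_nth (C * E) n = gauss_poly q n 1"
      unfolding gauss_poly_def inv_qfact_prod_def C_def E_def fps_mult_nth by (rule sum.cong) auto
    also have "\<dots> = fps_nth 1 n"
      using gauss_poly_one[OF q, of n] by (cases n) (simp_all add: gauss_poly_def inv_qfact_prod_def numeral_2_eq_2)
    finally show "fps_nth (C * E) n = fps_nth 1 n" .
  qed
  have T: "Abs_fps t = Abs_fps a * E"
  proof (rule fps_ext)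
    fix n
    have "t n = (\<Sum>k=0..n. a (n - (n - k)) / qfact q (n - k))"
      unfolding t by (rule sum.atLeastAtMost_rev [of _ 0 n, simplified])
    then show "fps_nth (Abs_fps t) n = fps_nth (Abs_fps a * E) n"
      by (simp add: E_def fps_mult_nth)
  qed
  have "Abs_fps t * C = Abs_fps a * (C * E)" unfolding T by (simp only: mult_ac)
  then have A: "Abs_fps a = Abs_fps t * C" unfolding CE by simp
  have "a n = fps_nth (Abs_fps t * C) n" by (simp flip: A)
  also have "\<dots> = (\<Sum>k=0..n. t k * ((-1) ^ (n - k) * q ^ ((n - k) choose 2) / qfact q (n - k)))"
    by (simp add: C_def fps_mult_nth)
  also have "\<dots> = (\<Sum>k=0..n. (-1) ^ k * q ^ (k choose 2) / qfact q k * t (n - k))"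
    by (rule sum.atLeastAtMost_rev [of _ 0 n, simplified, THEN trans]) (rule sum.cong, auto)
  finally show ?thesis .
qed

lemma fix_weight_0_closed:
  fixes q :: real
  assumes q: "q \<noteq> -1"
  shows "fix_weight q n 0 = qfact q n
    * (\<Sum>k=0..n. (-1) ^ k * q ^ (k choose 2) / qfact q k * ((1 - q) / (1 + q)) ^ ((n - k) div 2))"
proof -
  have nz: "qfact q k \<noteq> 0" for k using qfact_nonzero[OF q] .
  have "((1 - q) / (1 + q)) ^ (n div 2) = (\<Sum>k=0..n. fix_weight q (n - k) 0 / qfact q (n - k) / qfact q k)"
    for n
  proof -
    have "qfact q n * ((1 - q) / (1 + q)) ^ (n div 2) = (\<Sum>k=0..n. fix_weight q n k)"
      unfolding sum_sign_maj_eq_sum_fix_weight [symmetric]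
      using sum_sign_maj_perms_closed[of q n] q by simp
    also have "\<dots> = (\<Sum>k=0..n. qfact q n * (fix_weight q (n - k) 0 / qfact q (n - k) / qfact q k))"
      by (rule sum.cong) (use fix_weight_reduce nz in \<open>auto simp: field_simps\<close>)
    also have "\<dots> = qfact q n * (\<Sum>k=0..n. fix_weight q (n - k) 0 / qfact q (n - k) / qfact q k)"
      by (simp add: sum_distrib_left)
    finally show ?thesis using nz[of n] by simp
  qed
  from qexp_convolution_inverse[OF q this, of n] nz[of n] show ?thesis
    by (simp add: field_simps)
qed

lemma sum_derangements_eq_fix_weight:
  "(\<Sum>\<sigma>\<in>derangements n. (-1) ^ inv_num n \<sigma> * q ^ maj n \<sigma>) = fix_weight q n 0"
  using sum.reindex_bij_betw[OF bij_betw_perm_list_derangements, of "sign_maj q"]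
  by (simp add: fix_weight_def sign_maj_def maj_eq_maj_list inv_num_eq_inv_list)

theorem theorem2p4:
  fixes n :: nat and q :: real
  assumes "n \<ge> 1" and "q \<noteq> -1"
  shows "(\<Sum>\<sigma>\<in>derangements n. (-1) ^ inv_num n \<sigma> * q ^ maj n \<sigma>)
    = qfact q n * (\<Sum>k=0..n. (-1) ^ k * q ^ (k choose 2) / qfact q k
        * ((1 - q) / (1 + q)) ^ ((n - k) div 2))"
  unfolding sum_derangements_eq_fix_weight using fix_weight_0_closed[OF assms(2)] .

end
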